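(* Consider the delayed bandit setting and Algorithm DEW described in the context, run with learning rate $\eta>0$ and a known bound $d_{\max}$ with $d_{\max}\ge \max_t d_t$. Then, against an oblivious adversary, its expected regret satisfies $$\bar{\mathcal R}_T\le \max\left\{\frac{\ln K}{\eta},\,4e\,d_{\max}\ln K\right\}+\eta\left(\frac{KTe}{2}+D\right),$$ where $D=\sum_{t=1}^T d_t$. In particular, if $T$ and $D$ are known and $\eta=\sqrt{\frac{\ln K}{KTe/2+D}}$ satisfies $\eta\le \frac{1}{4e\,d_{\max}}$, then $$\bar{\mathcal R}_T\le 2\sqrt{\left(\frac{KTe}{2}+D\right)\ln K}.$$
   Context: Setting: fix integers $K\ge 2$, $T\ge 1$, and write $[K]=\{1,\dots,K\}$. An oblivious adversary fixes in advance losses $\ell_t^a\in[0,1]$ for $t=1,2,\dots$, $a\in[K]$, and nonnegative integer delays $d_1,d_2,\dots$. In each round $t$ the learner picks (possibly at random) an action $A_t\in[K]$ and suffers loss $\ell_t^{A_t}$; at the end of round $t$ (after $A_t$ has been chosen) it observes the pairs $(s,\ell_s^{A_s})$ for all $s\le t$ with $s+d_s=t$. The expected regret is $\bar{\mathcal R}_T=\mathbb E\big[\sum_{t=1}^T\ell_t^{A_t}\big]-\min_{a\in[K]}\sum_{t=1}^T\ell_t^a$, the expectation being over the learner's randomization. $D=\sum_{t=1}^T d_t$. Algorithm DEW (delayed exponential weights) with inputs $\eta>0$ and $d_{\max}\ge\max_t d_t$: set $\eta'=\min\{\eta,(4e\,d_{\max})^{-1}\}$ and $w_0^a=1$ for all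 $a$. For $t=1,2,\dots$: let $p_t^a=w_{t-1}^a/\sum_b w_{t-1}^b$; draw $A_t\sim p_t$ and play it; at the end of round $t$, for every $s$ with $s+d_s=t$ form the estimates $\hat\ell_s^a=\ell_s^a\mathbb 1(a=A_s)/p_s^a$ for all $a$; update $w_t^a=w_{t-1}^a\exp\big(-\eta'\sum_{s:\,s+d_s=t}\hat\ell_s^a\big)$. *)

theory Defs
  imports "HOL-Analysis.Analysis"
begin

text \<open>Actions are 1..K, rounds are 1,2,....
  A history is a function A :: nat => nat giving the action played in each round.
  ell t a is the loss of action a in round t, d t is the delay of round t.\<close>

definition dew_eta' :: "real \<Rightarrow> nat \<Rightarrow> real" where
  "dew_eta' \<eta> dmax = (if dmax = 0 then \<eta> else min \<eta> (1 / (4 * exp 1 * real dmax)))"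

text \<open>dew_probs eta' K ell d A n s a = p_s^a (probability DEW puts on action a in round s)
  for all rounds s <= n, given the history A; 0 for s > n or s = 0.
  p_{n+1}^a is proportional to exp(-eta' * sum of loss estimates hat ell_s^a over the rounds s
  whose feedback arrived by the end of round n, i.e. s + d_s <= n).\<close>

primrec dew_probs :: "real \<Rightarrow> nat \<Rightarrow> (nat \<Rightarrow> nat \<Rightarrow> real) \<Rightarrow> (nat \<Rightarrow> nat) \<Rightarrow> (nat \<Rightarrow> nat)
    \<Rightarrow> nat \<Rightarrow> nat \<Rightarrow> nat \<Rightarrow> real" where
  "dew_probs eta K ell d A 0 = (\<lambda>s a. 0)"
| "dew_probs eta K ell d A (Suc n) =
     (let P = dew_probs eta K ell d A n;
          L = (\<lambda>a. \<Sum>s\<in>{s\<in>{1..n}. s + d s \<le> n}.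
                   ell s a * (if a = A s then 1 else 0) / P s a);
          W = (\<lambda>a. exp (- eta * L a))
      in (\<lambda>s a. if s \<le> n then P s a
               else if s = Suc n then W a / (\<Sum>b\<in>{1..K}. W b) else 0))"

definition dew_p :: "real \<Rightarrow> nat \<Rightarrow> (nat \<Rightarrow> nat \<Rightarrow> real) \<Rightarrow> (nat \<Rightarrow> nat) \<Rightarrow> (nat \<Rightarrow> nat)
    \<Rightarrow> nat \<Rightarrow> nat \<Rightarrow> real" where
  "dew_p eta K ell d A t a = dew_probs eta K ell d A t t a"

text \<open>Expected cumulative loss of DEW (inputs eta, dmax) over rounds 1..T:
  exact expectation over all action histories in {1..K}^T, each weighted by its probability
  under the algorithm's sequential sampling.\<close>

definition dew_expected_loss :: "nat \<Rightarrow> nat \<Rightarrow> (nat \<Rightarrow> nat \<Rightarrow> real) \<Rightarrow> (nat \<Rightarrow> nat)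
    \<Rightarrow> real \<Rightarrow> nat \<Rightarrow> real" where
  "dew_expected_loss K T ell d \<eta> dmax =
     (\<Sum>A\<in>PiE {1..T} (\<lambda>_. {1..K}).
        (\<Prod>t\<in>{1..T}. dew_p (dew_eta' \<eta> dmax) K ell d A t (A t)) * (\<Sum>t=1..T. ell t (A t)))"

definition dew_regret :: "nat \<Rightarrow> nat \<Rightarrow> (nat \<Rightarrow> nat \<Rightarrow> real) \<Rightarrow> (nat \<Rightarrow> nat)
    \<Rightarrow> real \<Rightarrow> nat \<Rightarrow> real" where
  "dew_regret K T ell d \<eta> dmax =
     dew_expected_loss K T ell d \<eta> dmax - (MIN a\<in>{1..K}. \<Sum>t=1..T. ell t a)"

end

theory Submission
  imports Defs
begin

text \<open>Along a fixed history of actions, DEW is exponential weights fed with importance-weighted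
  estimates that arrive late.  The potential argument for \<open>ln (\<Sum>b. exp (- \<eta> L b))\<close>, with
  \<open>exp (- y) \<le> 1 - y + y\<^sup>2 / 2\<close>, bounds the estimated loss of the distributions
  \<open>p (t + d t)\<close> in force when the feedback of round \<open>t\<close> arrives by that of any fixed action, plus
  \<open>ln K / \<eta>\<close> and \<open>\<eta> / 2\<close> times a second moment; replacing \<open>p (t + d t)\<close> by the distribution
  \<open>p t\<close> actually played costs at most \<open>\<eta>\<close> per feedback arriving during the delay of round \<open>t\<close>.

  In expectation the estimates are unbiased: the action of round \<open>s\<close> is invisible to DEW until
  its feedback arrives, so it may be redrawn from \<open>p s\<close>.  The condition \<open>4 e \<eta> dmax \<le> 1\<close> keeps
  \<open>p n\<close> within a factor 2 of \<open>p s\<close> for \<open>s \<le> n \<le> s + dmax\<close>, so the second moment is at most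
  \<open>2 K\<close> per round plus 1 per ordered pair of distinct rounds arriving together.  The arrivals
  during delays plus half the number of such pairs are at most \<open>D\<close>, which gives
  \<open>ln K / \<eta> + \<eta> (K T + D)\<close> for the clipped rate.\<close>

lemma exp_minus_le_quadratic:
  fixes y :: real
  assumes "0 \<le> y"
  shows "exp (- y) \<le> 1 - y + y\<^sup>2 / 2"
proof -
  obtain t where "exp (- y) = (\<Sum>m<3. (- y) ^ m / fact m) + exp t / fact 3 * (- y) ^ 3"
    using Maclaurin_exp_le[of "- y" 3] by blast
  moreover have "(\<Sum>m<3. (- y) ^ m / fact m) = 1 - y + y\<^sup>2 / 2"
    by (simp add: eval_nat_numeral fact_numeral)
  moreover have "exp t / fact 3 * (- y) ^ 3 \<le> 0"
    using assms by (simp add: mult_nonneg_nonpos)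
  ultimately show ?thesis by linarith
qed

lemma delay_overlap_count_le:
  fixes d :: "nat \<Rightarrow> nat" and T :: nat
  shows "(\<Sum>t\<in>{1..T}. \<Sum>s\<in>{1..T}. if t \<le> s + d s \<and> s + d s < t + d t then 1 else 0)
         + (\<Sum>t\<in>{1..T}. \<Sum>s\<in>{1..T}. if t \<noteq> s \<and> t + d t = s + d s then 1 else 0) / 2
         \<le> (\<Sum>t\<in>{1..T}. real (d t))"
proof -
  define w where "w t s = (if t \<le> s + d s \<and> s + d s < t + d t then 1 else 0)
    + (if t \<noteq> s \<and> t + d t = s + d s then 1 else 0) / (2::real)" for t s
  have pair_le: "w t s + w s t \<le> (if s \<le> t + d t then 1 else 0)" if "t < s" for t s
    using that unfolding w_def by (cases "s + d s < t + d t"; cases "s + d s = t + d t") auto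
  have "(\<Sum>t\<in>{1..T}. \<Sum>s\<in>{1..T}. w t s)
      = (\<Sum>t\<in>{1..T}. \<Sum>s\<in>{1..T}. if t < s then w t s else 0)
        + (\<Sum>t\<in>{1..T}. \<Sum>s\<in>{1..T}. if s < t then w t s else 0)"
    unfolding sum.distrib[symmetric] by (intro sum.cong refl) (auto simp: w_def)
  also have "(\<Sum>t\<in>{1..T}. \<Sum>s\<in>{1..T}. if s < t then w t s else 0)
           = (\<Sum>t\<in>{1..T}. \<Sum>s\<in>{1..T}. if t < s then w s t else 0)"
    by (rule sum.swap)
  also have "(\<Sum>t\<in>{1..T}. \<Sum>s\<in>{1..T}. if t < s then w t s else 0) + \<dots>
      \<le> (\<Sum>t\<in>{1..T}. \<Sum>s\<in>{1..T}. if t < s \<and> s \<le> t + d t then 1 else 0)"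
    unfolding sum.distrib[symmetric]
  proof (intro sum_mono)
    fix t s :: nat
    show "(if t < s then w t s else 0) + (if t < s then w s t else 0)
        \<le> (if t < s \<and> s \<le> t + d t then 1 else 0)"
      using pair_le[of t s] by auto
  qed
  also have "\<dots> \<le> (\<Sum>t\<in>{1..T}. real (d t))"
  proof (rule sum_mono)
    fix t
    have "(\<Sum>s\<in>{1..T}. if t < s \<and> s \<le> t + d t then 1 else 0::real)
        = real (card {s\<in>{1..T}. t < s \<and> s \<le> t + d t})"
      by (simp add: sum.inter_filter[symmetric])
    also have "card {s\<in>{1..T}. t < s \<and> s \<le> t + d t} \<le> card {t<..t + d t}"
      by (rule card_mono) auto
    finally show "(\<Sum>s\<in>{1..T}. if t < s \<and> s \<le> t + d t then 1 else 0::real) \<le> real (d t)"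
      by simp
  qed
  finally show ?thesis
    unfolding w_def sum_divide_distrib sum.distrib[symmetric] .
qed


lemma mult_one_minus_le_imp_le_double:
  fixes p q x :: real
  assumes "p * (1 - x) \<le> q" and "x \<le> 1/2" and "0 \<le> p"
  shows "p \<le> 2 * q"
proof -
  have "p * (1/2) \<le> p * (1 - x)" using assms(2,3) by (intro mult_left_mono) auto
  then show ?thesis using assms(1) by simp
qed

lemma dew_probs_eq_dew_p:
  "s \<le> n \<Longrightarrow> dew_probs eta K ell d A n s a = dew_p eta K ell d A s a"
  unfolding dew_p_def by (induction n) (auto simp: Let_def le_Suc_eq)

lemma dew_probs_cong_losses:
  assumes "\<And>s a. s < n \<Longrightarrow> ell s a = ell' s a"
  shows "dew_probs eta K ell d A n = dew_probs eta K ell' d A n"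
  using assms
proof (induction n)
  case (Suc n)
  then have same_probs: "dew_probs eta K ell d A n = dew_probs eta K ell' d A n" by simp
  have same_estimates:
    "(\<Sum>s\<in>{s\<in>{1..n}. s + d s \<le> n}. ell s a * (if a = A s then 1 else 0) / P s a)
     = (\<Sum>s\<in>{s\<in>{1..n}. s + d s \<le> n}. ell' s a * (if a = A s then 1 else 0) / P s a)" for a P
    using Suc.prems by (intro sum.cong) auto
  show ?case by (simp only: dew_probs.simps Let_def same_probs same_estimates)
qed simp

section \<open>Expectations over action histories\<close>

definition determined_by :: "nat \<Rightarrow> ((nat \<Rightarrow> nat) \<Rightarrow> real) \<Rightarrow> bool" where
  "determined_by m f \<longleftrightarrow> (\<forall>A B. (\<forall>j\<in>{1..m}. A j = B j) \<longrightarrow> f A = f B)"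

lemma determined_by_const: "determined_by m (\<lambda>_. c)"
  unfolding determined_by_def by simp

lemma determined_by_mult:
  "determined_by m f \<Longrightarrow> determined_by m g \<Longrightarrow> determined_by m (\<lambda>A. f A * g A)"
  unfolding determined_by_def by metis

lemma determined_by_diff:
  "determined_by m f \<Longrightarrow> determined_by m g \<Longrightarrow> determined_by m (\<lambda>A. f A - g A)"
  unfolding determined_by_def by metis

lemma determined_by_sum:
  "(\<And>i. i \<in> I \<Longrightarrow> determined_by m (f i)) \<Longrightarrow> determined_by m (\<lambda>A. \<Sum>i\<in>I. f i A)"
  unfolding determined_by_def by (metis (no_types, lifting) sum.cong)

lemma determined_by_mono: "determined_by m f \<Longrightarrow> m \<le> k \<Longrightarrow> determined_by k f"
  unfolding determined_by_def by (meson atLeastAtMost_iff order_trans)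

locale history_kernel =
  fixes K :: nat and q :: "(nat \<Rightarrow> nat) \<Rightarrow> nat \<Rightarrow> nat \<Rightarrow> real"
  assumes kernel_nonneg: "0 \<le> q A t a"
    and kernel_sum: "0 < t \<Longrightarrow> (\<Sum>a\<in>{1..K}. q A t a) = 1"
    and kernel_causal: "(\<And>j. j < t \<Longrightarrow> A j = B j) \<Longrightarrow> q A t = q B t"
begin

definition hist_prob :: "nat \<Rightarrow> (nat \<Rightarrow> nat) \<Rightarrow> real" where
  "hist_prob m A = (\<Prod>t\<in>{1..m}. q A t (A t))"

definition expect :: "nat \<Rightarrow> ((nat \<Rightarrow> nat) \<Rightarrow> real) \<Rightarrow> real" where
  "expect m f = (\<Sum>A\<in>PiE {1..m} (\<lambda>_. {1..K}). hist_prob m A * f A)"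

lemma hist_prob_nonneg: "0 \<le> hist_prob m A"
  unfolding hist_prob_def by (intro prod_nonneg kernel_nonneg)

lemma expect_mono:
  "(\<And>A. A \<in> PiE {1..m} (\<lambda>_. {1..K}) \<Longrightarrow> f A \<le> g A) \<Longrightarrow> expect m f \<le> expect m g"
  unfolding expect_def by (intro sum_mono mult_left_mono hist_prob_nonneg) auto

lemma expect_cong:
  "(\<And>A. A \<in> PiE {1..m} (\<lambda>_. {1..K}) \<Longrightarrow> f A = g A) \<Longrightarrow> expect m f = expect m g"
  unfolding expect_def by (intro sum.cong) auto

lemma expect_add: "expect m (\<lambda>A. f A + g A) = expect m f + expect m g"
  unfolding expect_def by (simp add: algebra_simps sum.distrib)

lemma expect_cmult: "expect m (\<lambda>A. c * f A) = c * expect m f"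
  unfolding expect_def by (simp add: algebra_simps sum_distrib_left)

lemma expect_sum: "finite I \<Longrightarrow> expect m (\<lambda>A. \<Sum>i\<in>I. f i A) = (\<Sum>i\<in>I. expect m (f i))"
  unfolding expect_def sum_distrib_left by (subst sum.swap) simp

lemma expect_Suc:
  assumes "determined_by m f"
  shows "expect (Suc m) f = expect m f"
proof -
  have ins: "{1..Suc m} = insert (Suc m) {1..m}" by auto
  have nin: "Suc m \<notin> {1..m}" by simp
  let ?ext = "\<lambda>(y::nat, g::nat \<Rightarrow> nat). g(Suc m := y)"
  have hist_prob_ext: "hist_prob (Suc m) (g(Suc m := y)) = q g (Suc m) y * hist_prob m g" for g y
  proof -
    have same: "q (g(Suc m := y)) t = q g t" if "t \<le> Suc m" for t
      using that by (intro kernel_causal) simp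
    have "(\<Prod>t\<in>{1..m}. q (g(Suc m := y)) t ((g(Suc m := y)) t)) = hist_prob m g"
      unfolding hist_prob_def using same by (intro prod.cong) auto
    then show ?thesis
      unfolding hist_prob_def ins using nin same by (simp add: prod.insert)
  qed
  have "expect (Suc m) f
      = (\<Sum>z\<in>{1..K} \<times> PiE {1..m} (\<lambda>_. {1..K}). hist_prob (Suc m) (?ext z) * f (?ext z))"
    unfolding expect_def ins PiE_insert_eq
    using sum.reindex[OF inj_combinator[OF nin, of "\<lambda>_. {1..K}"]] by simp
  also have "\<dots> = (\<Sum>y\<in>{1..K}. \<Sum>g\<in>PiE {1..m} (\<lambda>_. {1..K}). q g (Suc m) y * (hist_prob m g * f g))"
    unfolding sum.cartesian_product using assms unfolding determined_by_def
    by (intro sum.cong refl) (auto simp: hist_prob_ext split: prod.splits)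
  also have "\<dots> = (\<Sum>g\<in>PiE {1..m} (\<lambda>_. {1..K}). (\<Sum>y\<in>{1..K}. q g (Suc m) y) * (hist_prob m g * f g))"
    by (subst sum.swap) (simp add: sum_distrib_right)
  also have "\<dots> = expect m f"
    unfolding expect_def using kernel_sum[of "Suc m"] by simp
  finally show ?thesis .
qed

lemma expect_marginal: "determined_by m f \<Longrightarrow> m \<le> k \<Longrightarrow> expect k f = expect m f"
  by (induction k) (auto simp: le_Suc_eq expect_Suc determined_by_mono)

lemma expect_const: "expect m (\<lambda>_. c) = c"
  using expect_marginal[of 0 "\<lambda>_. c" m] by (simp add: determined_by_const expect_def hist_prob_def)

lemma expect_resample:
  assumes s: "s \<in> {1..m}"
    and blind: "\<And>A x t. t \<in> {1..m} \<Longrightarrow> q (A(s := x)) t = q A t"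
  shows "expect m f = expect m (\<lambda>A. \<Sum>x\<in>{1..K}. q A s x * f (A(s := x)))"
proof -
  let ?H = "PiE {1..m} (\<lambda>_. {1..K})"
  define rest where "rest A = (\<Prod>t\<in>{1..m} - {s}. q A t (A t))" for A
  have hist_prob_split: "hist_prob m A = q A s (A s) * rest A" for A
    unfolding hist_prob_def rest_def using s by (simp add: prod.remove)
  have rest_upd: "rest (A(s := x)) = rest A" for A x
    unfolding rest_def using blind by (intro prod.cong) auto
  define swap where "swap z = (case z of (A, x) \<Rightarrow> (A(s := x), A s))" for z :: "(nat \<Rightarrow> nat) \<times> nat"
  have swap_involution: "swap (swap z) = z \<and> swap z \<in> ?H \<times> {1..K}" if z: "z \<in> ?H \<times> {1..K}" for z
  proof -
    obtain A x where z_eq: "z = (A, x)" and A: "A \<in> ?H" and x: "x \<in> {1..K}"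
      using z by auto
    have "A(s := x) \<in> PiE (insert s {1..m}) (\<lambda>_. {1..K})" using PiE_fun_upd[OF x A] .
    then show ?thesis unfolding swap_def z_eq using A s insert_absorb[OF s] by auto
  qed
  have "expect m (\<lambda>A. \<Sum>x\<in>{1..K}. q A s x * f (A(s := x)))
      = (\<Sum>(A, x)\<in>?H \<times> {1..K}. hist_prob m A * (q A s x * f (A(s := x))))"
    unfolding expect_def sum_distrib_left sum.cartesian_product by simp
  also have "\<dots> = (\<Sum>(A, x)\<in>?H \<times> {1..K}. q A s x * (hist_prob m A * f A))"
  proof (rule sym, rule sum.reindex_bij_witness[where i = swap and j = swap])
    fix z assume "z \<in> ?H \<times> {1..K}"
    then obtain A x where z_eq: "z = (A, x)" by (cases z)
    show "(case swap z of (A, x) \<Rightarrow> hist_prob m A * (q A s x * f (A(s := x))))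
        = (case z of (A, x) \<Rightarrow> q A s x * (hist_prob m A * f A))"
      unfolding swap_def z_eq hist_prob_split using blind[of s A x] s rest_upd by simp
  qed (use swap_involution in auto)
  also have "\<dots> = (\<Sum>A\<in>?H. (\<Sum>x\<in>{1..K}. q A s x) * (hist_prob m A * f A))"
    unfolding sum_distrib_right sum.cartesian_product by simp
  also have "\<dots> = expect m f"
    unfolding expect_def using kernel_sum[of s] s by simp
  finally show ?thesis by simp
qed

end

section \<open>The probabilities of DEW\<close>

locale dew_run =
  fixes K T :: nat and ell :: "nat \<Rightarrow> nat \<Rightarrow> real" and d :: "nat \<Rightarrow> nat"
    and \<eta> :: real and dmax :: nat
  assumes K_pos: "1 \<le> K" and eta_pos: "0 < \<eta>"
    and loss_range: "a \<in> {1..K} \<Longrightarrow> 0 \<le> ell t a \<and> ell t a \<le> 1"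
    and loss_beyond_horizon: "T < t \<Longrightarrow> ell t a = 0"
      \<comment> \<open>harmless, since DEW up to round \<open>T\<close> never reads later losses; it lets every
        cumulative estimate be a sum over the rounds \<open>1..T\<close>\<close>
    and delay_le: "d t \<le> dmax"
    and eta_delay_le: "4 * exp 1 * \<eta> * dmax \<le> 1"
begin

abbreviation prob :: "(nat \<Rightarrow> nat) \<Rightarrow> nat \<Rightarrow> nat \<Rightarrow> real" where
  "prob \<equiv> dew_p \<eta> K ell d"

definition est :: "(nat \<Rightarrow> nat) \<Rightarrow> nat \<Rightarrow> nat \<Rightarrow> real" where
  "est A s a = ell s a * (if a = A s then 1 else 0) / prob A s a"

definition cum_est :: "(nat \<Rightarrow> nat) \<Rightarrow> nat \<Rightarrow> nat \<Rightarrow> real" where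
  "cum_est A n a = (\<Sum>s\<in>{1..T}. if s + d s \<le> n then est A s a else 0)"

definition arrived_est :: "(nat \<Rightarrow> nat) \<Rightarrow> nat \<Rightarrow> nat \<Rightarrow> real" where
  "arrived_est A n a = (\<Sum>s\<in>{1..T}. if s + d s = n then est A s a else 0)"

definition potential :: "(nat \<Rightarrow> nat) \<Rightarrow> nat \<Rightarrow> real" where
  "potential A n = (\<Sum>b\<in>{1..K}. exp (- \<eta> * cum_est A n b))"

lemma cum_est_eq_observed_sum:
  "(\<Sum>s\<in>{s\<in>{1..n}. s + d s \<le> n}. est A s a) = cum_est A n a"
proof -
  have "(\<Sum>s\<in>{s\<in>{1..n}. s + d s \<le> n}. est A s a)
      = (\<Sum>s\<in>{1..max n T}. if s + d s \<le> n then est A s a else 0)"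
    by (subst sum.inter_filter[symmetric]) (auto intro: sum.mono_neutral_left)
  also have "\<dots> = cum_est A n a"
    unfolding cum_est_def
    by (rule sum.mono_neutral_right) (auto simp: est_def loss_beyond_horizon)
  finally show ?thesis .
qed

lemma prob_Suc: "prob A (Suc n) a = exp (- \<eta> * cum_est A n a) / potential A n"
proof -
  have "(\<Sum>s\<in>{s\<in>{1..n}. s + d s \<le> n}.
           ell s b * (if b = A s then 1 else 0) / dew_probs \<eta> K ell d A n s b) = cum_est A n b" for b
    unfolding cum_est_eq_observed_sum[symmetric] est_def
    by (intro sum.cong refl) (simp add: dew_probs_eq_dew_p)
  then show ?thesis
    unfolding dew_p_def potential_def by (simp add: Let_def)
qed

lemma potential_pos: "0 < potential A n"
  unfolding potential_def using K_pos by (intro sum_pos) auto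

lemma prob_pos: "0 < n \<Longrightarrow> 0 < prob A n a"
  using potential_pos by (cases n) (auto simp: prob_Suc)

lemma prob_sum: "0 < n \<Longrightarrow> (\<Sum>a\<in>{1..K}. prob A n a) = 1"
  using potential_pos[of A "n - 1"]
  by (cases n) (auto simp: prob_Suc potential_def sum_divide_distrib[symmetric])

lemma prob_cong_observed:
  assumes "\<And>j. 1 \<le> j \<Longrightarrow> j \<le> T \<Longrightarrow> j + d j < n \<Longrightarrow> A j = B j"
  shows "m \<le> n \<Longrightarrow> prob A m = prob B m"
proof (induction m rule: less_induct)
  case (less m)
  show ?case
  proof (cases m)
    case 0
    then show ?thesis by (simp add: dew_p_def fun_eq_iff)
  next
    case (Suc m')
    have "cum_est A m' a = cum_est B m' a" for a
      unfolding cum_est_def est_def using assms less Suc by (intro sum.cong refl) auto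
    then show ?thesis unfolding Suc by (simp add: fun_eq_iff prob_Suc potential_def)
  qed
qed

lemma prob_blind_to_pending:
  "t \<le> s + d s \<Longrightarrow> prob (A(s := x)) t = prob A t"
  by (rule prob_cong_observed[of t]) auto

sublocale history_kernel K prob
proof
  show "0 \<le> prob A t a" for A t a
    using prob_pos[of t A a] by (cases t) (auto simp: dew_p_def)
  show "0 < t \<Longrightarrow> (\<Sum>a\<in>{1..K}. prob A t a) = 1" for A t by (rule prob_sum)
  show "(\<And>j. j < t \<Longrightarrow> A j = B j) \<Longrightarrow> prob A t = prob B t" for t A B
    by (rule prob_cong_observed[of t]) auto
qed

lemma est_nonneg: "a \<in> {1..K} \<Longrightarrow> 0 \<le> est A s a"
  unfolding est_def using loss_range kernel_nonneg by simp

lemma arrived_est_nonneg: "a \<in> {1..K} \<Longrightarrow> 0 \<le> arrived_est A n a"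
  unfolding arrived_est_def by (intro sum_nonneg) (simp add: est_nonneg)

lemma cum_est_Suc: "cum_est A (Suc n) a = cum_est A n a + arrived_est A (Suc n) a"
  unfolding cum_est_def arrived_est_def sum.distrib[symmetric]
  by (intro sum.cong refl) (auto simp: le_Suc_eq)

definition normalizer :: "(nat \<Rightarrow> nat) \<Rightarrow> nat \<Rightarrow> real" where
  "normalizer A n = (\<Sum>b\<in>{1..K}. prob A n b * exp (- \<eta> * arrived_est A n b))"

lemma normalizer_eq_potential_ratio:
  "normalizer A (Suc m) = potential A (Suc m) / potential A m"
  unfolding normalizer_def prob_Suc potential_def[of A "Suc m"] cum_est_Suc sum_divide_distrib
  by (intro sum.cong refl) (simp add: exp_add[symmetric] algebra_simps)

lemma normalizer_pos: "0 < n \<Longrightarrow> 0 < normalizer A n"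
  using normalizer_eq_potential_ratio potential_pos by (cases n) auto

lemma prob_Suc_update:
  assumes "0 < n"
  shows "prob A (Suc n) a = prob A n a * exp (- \<eta> * arrived_est A n a) / normalizer A n"
proof -
  obtain m where n: "n = Suc m" using assms by (cases n) auto
  have "exp (- \<eta> * cum_est A n a) = exp (- \<eta> * cum_est A m a) * exp (- \<eta> * arrived_est A n a)"
    unfolding n cum_est_Suc by (simp add: exp_add[symmetric] algebra_simps)
  then show ?thesis
    using potential_pos[of A m] potential_pos[of A n]
    unfolding n normalizer_eq_potential_ratio prob_Suc by (simp add: field_simps)
qed

lemma normalizer_le_one: "0 < n \<Longrightarrow> normalizer A n \<le> 1"
proof -
  assume n: "0 < n"
  have "normalizer A n \<le> (\<Sum>b\<in>{1..K}. prob A n b)"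
    unfolding normalizer_def using eta_pos arrived_est_nonneg
    by (intro sum_mono mult_left_le kernel_nonneg) auto
  then show ?thesis using prob_sum[OF n] by simp
qed

lemma normalizer_ge:
  assumes "0 < n"
  shows "1 - \<eta> * (\<Sum>b\<in>{1..K}. prob A n b * arrived_est A n b) \<le> normalizer A n"
proof -
  have "(\<Sum>b\<in>{1..K}. prob A n b * (1 - \<eta> * arrived_est A n b)) \<le> normalizer A n"
    unfolding normalizer_def
    by (intro sum_mono mult_left_mono kernel_nonneg)
       (metis exp_ge_add_one_self minus_mult_left uminus_add_conv_diff add.commute)
  moreover have "(\<Sum>b\<in>{1..K}. prob A n b * (1 - \<eta> * arrived_est A n b))
      = 1 - \<eta> * (\<Sum>b\<in>{1..K}. prob A n b * arrived_est A n b)"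
    using prob_sum[OF assms] by (simp add: algebra_simps sum_subtractf sum_distrib_left)
  ultimately show ?thesis by simp
qed

lemma prob_Suc_mult_normalizer_le:
  "0 < n \<Longrightarrow> a \<in> {1..K} \<Longrightarrow> prob A (Suc n) a * normalizer A n \<le> prob A n a"
  using prob_Suc_update[of n A a] normalizer_pos[of n A] arrived_est_nonneg[of a A n]
    eta_pos kernel_nonneg[of A n a]
  by (simp add: mult_left_le)

lemma prob_Suc_drop_le:
  assumes n: "0 < n" and a: "a \<in> {1..K}"
  shows "prob A n a - prob A (Suc n) a \<le> \<eta> * (prob A n a * arrived_est A n a)"
proof -
  have "prob A n a * (1 - \<eta> * arrived_est A n a) \<le> prob A n a * exp (- \<eta> * arrived_est A n a)"
    using exp_ge_add_one_self[of "- \<eta> * arrived_est A n a"] kernel_nonneg[of A n a]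
    by (intro mult_left_mono) auto
  also have "\<dots> \<le> prob A (Suc n) a"
    unfolding prob_Suc_update[OF n]
    using normalizer_pos[OF n] normalizer_le_one[OF n] kernel_nonneg[of A n a]
    by (simp add: le_divide_eq mult_left_le)
  finally show ?thesis by (simp add: algebra_simps)
qed

section \<open>Stability of the probabilities over one delay\<close>

definition arrivals :: "nat \<Rightarrow> real" where
  "arrivals n = (\<Sum>j\<in>{1..T}. if j + d j = n then 1 else 0)"

definition arrivals_between :: "nat \<Rightarrow> nat \<Rightarrow> real" where
  "arrivals_between s n = (\<Sum>j\<in>{1..T}. if s \<le> j + d j \<and> j + d j < n then 1 else 0)"

lemma arrivals_between_Suc:
  "s \<le> n \<Longrightarrow> arrivals_between s (Suc n) = arrivals_between s n + arrivals n"
  unfolding arrivals_between_def arrivals_def sum.distrib[symmetric] by (intro sum.cong) auto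

lemma arrivals_between_self: "arrivals_between s s = 0"
  unfolding arrivals_between_def by (intro sum.neutral) auto

lemma eta_dmax_le: "4 * \<eta> * dmax \<le> 1/2"
proof -
  have "4 * \<eta> * dmax * 2 \<le> 4 * \<eta> * dmax * exp 1"
    using eta_pos exp_ge_add_one_self[of 1] by (intro mult_left_mono) auto
  then show ?thesis using eta_delay_le by (simp add: algebra_simps)
qed

lemma eta_arrivals_between_le:
  assumes "s \<le> n" and "n \<le> s + dmax"
  shows "2 * \<eta> * arrivals_between s n \<le> 1/2"
proof -
  have "{j\<in>{1..T}. s \<le> j + d j \<and> j + d j < n} \<subseteq> {s - dmax..<n}"
  proof
    fix j assume j: "j \<in> {j\<in>{1..T}. s \<le> j + d j \<and> j + d j < n}"
    then have "s \<le> j + dmax" using delay_le[of j] by auto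
    then show "j \<in> {s - dmax..<n}" using j by auto
  qed
  then have "card {j\<in>{1..T}. s \<le> j + d j \<and> j + d j < n} \<le> card {s - dmax..<n}"
    by (intro card_mono) simp_all
  also have "card {s - dmax..<n} \<le> 2 * dmax" using assms by simp
  finally have "arrivals_between s n \<le> 2 * dmax"
    unfolding arrivals_between_def by (simp add: sum.inter_filter[symmetric])
  then have "2 * \<eta> * arrivals_between s n \<le> 2 * \<eta> * (2 * dmax)"
    using eta_pos by (intro mult_left_mono) auto
  then show ?thesis using eta_dmax_le by simp
qed

lemma est_weighted_le_two:
  assumes "1 \<le> j" and ratio: "\<And>b. b \<in> {1..K} \<Longrightarrow> prob A n b \<le> 2 * prob A j b"
  shows "(\<Sum>b\<in>{1..K}. prob A n b * est A j b) \<le> 2"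
proof -
  have "(\<Sum>b\<in>{1..K}. prob A n b * est A j b) \<le> (\<Sum>b\<in>{1..K}. if b = A j then 2 else 0)"
  proof (rule sum_mono)
    fix b assume b: "b \<in> {1..K}"
    have "prob A n b * ell j b \<le> prob A n b"
      using loss_range[OF b, of j] kernel_nonneg[of A n b] by (simp add: mult_left_le)
    also have "\<dots> \<le> 2 * prob A j b" by (rule ratio[OF b])
    finally have "prob A n b * ell j b \<le> 2 * prob A j b" .
    then show "prob A n b * est A j b \<le> (if b = A j then 2 else 0)"
      using prob_pos[of j A b] assms(1) by (cases "b = A j") (auto simp: est_def divide_le_eq)
  qed
  also have "\<dots> \<le> 2" by (simp add: sum.delta)
  finally show ?thesis .
qed

lemma normalizer_ge_arrivals:
  assumes n: "0 < n"
    and ratio: "\<And>j b. j \<in> {1..T} \<Longrightarrow> j + d j = n \<Longrightarrow> b \<in> {1..K} \<Longrightarrow> prob A n b \<le> 2 * prob A j b"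
  shows "1 - 2 * \<eta> * arrivals n \<le> normalizer A n"
proof -
  have "(\<Sum>b\<in>{1..K}. prob A n b * arrived_est A n b)
      = (\<Sum>j\<in>{1..T}. if j + d j = n then (\<Sum>b\<in>{1..K}. prob A n b * est A j b) else 0)"
    unfolding arrived_est_def sum_distrib_left by (subst sum.swap) (auto intro!: sum.cong)
  also have "\<dots> \<le> (\<Sum>j\<in>{1..T}. if j + d j = n then 2 else 0)"
  proof (rule sum_mono)
    fix j assume "j \<in> {1..T}"
    then show "(if j + d j = n then \<Sum>b\<in>{1..K}. prob A n b * est A j b else 0)
        \<le> (if j + d j = n then 2 else 0)"
      using est_weighted_le_two[of j A n] ratio[of j] by auto
  qed
  also have "\<dots> = 2 * arrivals n"
    unfolding arrivals_def sum_distrib_left by (intro sum.cong) auto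
  finally have "(\<Sum>b\<in>{1..K}. prob A n b * arrived_est A n b) \<le> 2 * arrivals n" .
  then have "\<eta> * (\<Sum>b\<in>{1..K}. prob A n b * arrived_est A n b) \<le> \<eta> * (2 * arrivals n)"
    using eta_pos by (simp add: mult_left_mono)
  then show ?thesis using normalizer_ge[OF n, of A] by simp
qed

lemma prob_Suc_mult_one_minus_le:
  assumes n: "0 < n" and a: "a \<in> {1..K}" and "0 \<le> x" "0 \<le> y" "x + y \<le> 1/2"
    and normalizer: "1 - y \<le> normalizer A n"
  shows "prob A (Suc n) a * (1 - (x + y)) \<le> prob A n a * (1 - x)"
proof -
  have p_nonneg: "0 \<le> prob A (Suc n) a" by (rule kernel_nonneg)
  have "prob A (Suc n) a * (1 - (x + y)) \<le> (prob A (Suc n) a * (1 - y)) * (1 - x)"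
    using p_nonneg assms(3,4) mult_left_mono[of "1 - x - y" "(1 - y) * (1 - x)"]
    by (simp add: algebra_simps)
  also have "\<dots> \<le> (prob A (Suc n) a * normalizer A n) * (1 - x)"
    using normalizer p_nonneg assms(3-5) by (intro mult_right_mono mult_left_mono) auto
  also have "\<dots> \<le> prob A n a * (1 - x)"
    using prob_Suc_mult_normalizer_le[OF n a] assms(3-5) by (intro mult_right_mono) auto
  finally show ?thesis .
qed

text \<open>The feedback arriving at the end of round \<open>n\<close> lowers the normalizer by at most
  \<open>2 \<eta>\<close> per arrival as long as each arriving round's probabilities are within a factor 2 of
  the current ones, which the induction hypothesis provides.\<close>

lemma prob_stable_lower:
  "1 \<le> s \<Longrightarrow> s \<le> n \<Longrightarrow> n \<le> s + dmax \<Longrightarrow> a \<in> {1..K}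
    \<Longrightarrow> prob A n a * (1 - 2 * \<eta> * arrivals_between s n) \<le> prob A s a"
proof (induction n arbitrary: s a)
  case (Suc n)
  show ?case
  proof (cases "s = Suc n")
    case True
    then show ?thesis by (simp add: arrivals_between_self)
  next
    case False
    with Suc.prems have sn: "s \<le> n" and n: "0 < n" by auto
    have ratio: "prob A n b \<le> 2 * prob A j b"
      if "j \<in> {1..T}" "j + d j = n" "b \<in> {1..K}" for j b
    proof (rule mult_one_minus_le_imp_le_double)
      show "prob A n b * (1 - 2 * \<eta> * arrivals_between j n) \<le> prob A j b"
        using Suc.IH[of j b] that delay_le[of j] by auto
      show "2 * \<eta> * arrivals_between j n \<le> 1/2"
        using eta_arrivals_between_le[of j n] that delay_le[of j] by auto
    qed (rule kernel_nonneg)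
    define x where "x = 2 * \<eta> * arrivals_between s n"
    define y where "y = 2 * \<eta> * arrivals n"
    have x0: "0 \<le> x" and y0: "0 \<le> y"
      unfolding x_def y_def arrivals_between_def arrivals_def using eta_pos
      by (auto intro!: sum_nonneg mult_nonneg_nonneg)
    have xy: "2 * \<eta> * arrivals_between s (Suc n) = x + y"
      unfolding x_def y_def arrivals_between_Suc[OF sn] by (simp add: algebra_simps)
    have "prob A (Suc n) a * (1 - (x + y)) \<le> prob A n a * (1 - x)"
    proof (rule prob_Suc_mult_one_minus_le[OF n Suc.prems(4) x0 y0])
      show "x + y \<le> 1/2" using eta_arrivals_between_le[of s "Suc n"] Suc.prems xy by simp
      show "1 - y \<le> normalizer A n" unfolding y_def using normalizer_ge_arrivals[OF n] ratio by blast
    qed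
    also have "\<dots> \<le> prob A s a"
      using Suc.IH[of s a] Suc.prems sn unfolding x_def by simp
    finally show ?thesis unfolding xy .
  qed
qed simp

lemma prob_le_twice:
  assumes "1 \<le> s" "s \<le> n" "n \<le> s + dmax" "a \<in> {1..K}"
  shows "prob A n a \<le> 2 * prob A s a"
  using prob_stable_lower[OF assms, of A] eta_arrivals_between_le[OF assms(2,3)] kernel_nonneg
  by (rule mult_one_minus_le_imp_le_double)

section \<open>Unbiasedness of the delayed estimates\<close>

lemma determined_by_prob:
  "(\<And>j. 1 \<le> j \<Longrightarrow> j \<le> T \<Longrightarrow> j + d j < n \<Longrightarrow> j \<le> m) \<Longrightarrow> determined_by m (\<lambda>A. prob A n b)"
  unfolding determined_by_def using prob_cong_observed[of n] by (metis atLeastAtMost_iff le_refl)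

lemma determined_by_est: "s \<le> m \<or> T < s \<Longrightarrow> determined_by m (\<lambda>A. est A s b)"
proof (cases "T < s")
  case True
  then show ?thesis by (simp add: est_def loss_beyond_horizon determined_by_const)
next
  case False
  assume "s \<le> m \<or> T < s"
  with False have s: "s \<le> m" by simp
  show ?thesis unfolding determined_by_def
  proof (intro allI impI)
    fix A B :: "nat \<Rightarrow> nat" assume agree: "\<forall>j\<in>{1..m}. A j = B j"
    have "prob A s = prob B s" using agree s by (intro prob_cong_observed[of s]) auto
    moreover have "A s = B s \<or> s = 0" using agree s by auto
    ultimately show "est A s b = est B s b" unfolding est_def by (auto simp: dew_p_def)
  qed
qed

lemma expect_resample_round:
  assumes s: "s \<in> {1..T}" and f: "determined_by (min T (s + d s)) f"
  shows "expect T f = expect T (\<lambda>A. \<Sum>x\<in>{1..K}. prob A s x * f (A(s := x)))"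
proof -
  define m where "m = min T (s + d s)"
  have s_m: "s \<in> {1..m}" using s unfolding m_def by auto
  have "determined_by m (\<lambda>A. \<Sum>x\<in>{1..K}. prob A s x * f (A(s := x)))"
    unfolding determined_by_def
  proof (intro allI impI)
    fix A B :: "nat \<Rightarrow> nat" assume agree: "\<forall>j\<in>{1..m}. A j = B j"
    have "prob A s = prob B s" using agree s_m by (intro prob_cong_observed[of s]) auto
    moreover have "f (A(s := x)) = f (B(s := x))" for x
      using f agree unfolding determined_by_def m_def[symmetric] by auto
    ultimately show "(\<Sum>x\<in>{1..K}. prob A s x * f (A(s := x)))
        = (\<Sum>x\<in>{1..K}. prob B s x * f (B(s := x)))" by simp
  qed
  moreover have "expect m f = expect m (\<lambda>A. \<Sum>x\<in>{1..K}. prob A s x * f (A(s := x)))"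
    using s_m by (rule expect_resample) (simp add: m_def prob_blind_to_pending)
  ultimately show ?thesis
    using expect_marginal[OF f, of T] expect_marginal[of m _ T] unfolding m_def by simp
qed

lemma est_fun_upd: "est (A(s := x)) s a = ell s a * (if a = x then 1 else 0) / prob A s a"
  unfolding est_def using prob_blind_to_pending[of s s A x] by simp

lemma resampled_est_mean:
  assumes "a \<in> {1..K}" and "1 \<le> s"
  shows "(\<Sum>x\<in>{1..K}. prob A s x * (c * est (A(s := x)) s a)) = c * ell s a"
proof -
  have "(\<Sum>x\<in>{1..K}. prob A s x * (c * est (A(s := x)) s a))
      = (\<Sum>x\<in>{1..K}. if x = a then prob A s a * (c * ell s a / prob A s a) else 0)"
    unfolding est_fun_upd by (intro sum.cong) auto
  then show ?thesis using assms prob_pos[of s A a] by (simp add: sum.delta')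
qed

lemma resampled_est_second_moment:
  assumes "a \<in> {1..K}" and "1 \<le> s"
  shows "(\<Sum>x\<in>{1..K}. prob A s x * (c * (est (A(s := x)) s a)\<^sup>2)) = c * (ell s a)\<^sup>2 / prob A s a"
proof -
  have "(\<Sum>x\<in>{1..K}. prob A s x * (c * (est (A(s := x)) s a)\<^sup>2))
      = (\<Sum>x\<in>{1..K}. if x = a then prob A s a * (c * (ell s a / prob A s a)\<^sup>2) else 0)"
    unfolding est_fun_upd by (intro sum.cong) auto
  then show ?thesis using assms prob_pos[of s A a] by (simp add: sum.delta' power2_eq_square)
qed

lemma expect_est:
  assumes s: "s \<in> {1..T}" and a: "a \<in> {1..K}"
  shows "expect T (\<lambda>A. est A s a) = ell s a"
proof -
  have "expect T (\<lambda>A. est A s a) = expect T (\<lambda>A. \<Sum>x\<in>{1..K}. prob A s x * est (A(s := x)) s a)"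
    using s by (intro expect_resample_round determined_by_est) auto
  also have "\<dots> = expect T (\<lambda>_. ell s a)"
    using resampled_est_mean[OF a, of s _ 1] s by simp
  finally show ?thesis by (simp add: expect_const)
qed

lemma expect_weighted_est:
  assumes s: "s \<in> {1..T}"
    and w_determined: "\<And>b. determined_by (min T (s + d s)) (w b)"
    and w_blind: "\<And>A x b. w b (A(s := x)) = w b A"
  shows "expect T (\<lambda>A. \<Sum>b\<in>{1..K}. w b A * est A s b)
       = expect T (\<lambda>A. \<Sum>b\<in>{1..K}. w b A * ell s b)"
proof -
  have "expect T (\<lambda>A. \<Sum>b\<in>{1..K}. w b A * est A s b)
      = expect T (\<lambda>A. \<Sum>x\<in>{1..K}. prob A s x * (\<Sum>b\<in>{1..K}. w b A * est (A(s := x)) s b))"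
    using s expect_resample_round[of s "\<lambda>A. \<Sum>b\<in>{1..K}. w b A * est A s b"]
    by (simp add: w_blind determined_by_sum determined_by_mult w_determined determined_by_est)
  also have "\<dots> = expect T (\<lambda>A. \<Sum>b\<in>{1..K}. w b A * ell s b)"
  proof (rule expect_cong)
    fix A :: "nat \<Rightarrow> nat"
    have "(\<Sum>x\<in>{1..K}. prob A s x * (\<Sum>b\<in>{1..K}. w b A * est (A(s := x)) s b))
        = (\<Sum>b\<in>{1..K}. \<Sum>x\<in>{1..K}. prob A s x * (w b A * est (A(s := x)) s b))"
      unfolding sum_distrib_left by (rule sum.swap)
    also have "\<dots> = (\<Sum>b\<in>{1..K}. w b A * ell s b)"
      using s by (intro sum.cong refl resampled_est_mean) auto
    finally show "(\<Sum>x\<in>{1..K}. prob A s x * (\<Sum>b\<in>{1..K}. w b A * est (A(s := x)) s b))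
        = (\<Sum>b\<in>{1..K}. w b A * ell s b)" .
  qed
  finally show ?thesis .
qed

lemma expect_prob_weighted_le_one:
  assumes "0 < n" and w: "\<And>A b. b \<in> {1..K} \<Longrightarrow> 0 \<le> w b A \<and> w b A \<le> 1"
  shows "expect T (\<lambda>A. \<Sum>b\<in>{1..K}. prob A n b * w b A) \<le> 1"
proof -
  have "expect T (\<lambda>A. \<Sum>b\<in>{1..K}. prob A n b * w b A) \<le> expect T (\<lambda>_. 1)"
  proof (rule expect_mono)
    fix A :: "nat \<Rightarrow> nat"
    have "(\<Sum>b\<in>{1..K}. prob A n b * w b A) \<le> (\<Sum>b\<in>{1..K}. prob A n b)"
      using w kernel_nonneg by (intro sum_mono) (simp add: mult_left_le)
    then show "(\<Sum>b\<in>{1..K}. prob A n b * w b A) \<le> 1" using prob_sum[OF assms(1)] by simp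
  qed
  then show ?thesis by (simp add: expect_const)
qed

lemma expect_arrival_est_le_one:
  assumes s: "s \<in> {1..T}"
  shows "expect T (\<lambda>A. \<Sum>b\<in>{1..K}. prob A (s + d s) b * est A s b) \<le> 1"
proof -
  have "expect T (\<lambda>A. \<Sum>b\<in>{1..K}. prob A (s + d s) b * est A s b)
      = expect T (\<lambda>A. \<Sum>b\<in>{1..K}. prob A (s + d s) b * ell s b)"
    using s by (intro expect_weighted_est determined_by_prob) (auto simp: prob_blind_to_pending)
  also have "\<dots> \<le> 1"
    using s loss_range by (intro expect_prob_weighted_le_one) auto
  finally show ?thesis .
qed

definition cross_est :: "nat \<Rightarrow> nat \<Rightarrow> (nat \<Rightarrow> nat) \<Rightarrow> real" where
  "cross_est s s' A = (\<Sum>b\<in>{1..K}. prob A (s + d s) b * est A s b * est A s' b)"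

lemma expect_cross_est_le_one:
  assumes s: "s \<in> {1..T}" and s': "s' \<in> {1..T}" and "s \<noteq> s'" and same: "s + d s = s' + d s'"
  shows "expect T (cross_est s s') \<le> 1"
proof -
  have est_s'_blind: "est (A(s := x)) s' b = est A s' b" for A x b
    unfolding est_def using \<open>s \<noteq> s'\<close> prob_blind_to_pending[of s' s A x] same by simp
  have "expect T (cross_est s s')
      = expect T (\<lambda>A. \<Sum>b\<in>{1..K}. (prob A (s + d s) b * est A s' b) * est A s b)"
    unfolding cross_est_def by (simp add: algebra_simps)
  also have "\<dots> = expect T (\<lambda>A. \<Sum>b\<in>{1..K}. (prob A (s + d s) b * ell s b) * est A s' b)"
    using s s' same
    by (subst expect_weighted_est)
       (auto intro!: determined_by_mult determined_by_prob determined_by_est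
         simp: prob_blind_to_pending est_s'_blind algebra_simps)
  also have "\<dots> = expect T (\<lambda>A. \<Sum>b\<in>{1..K}. prob A (s + d s) b * (ell s b * ell s' b))"
    using s' same
    by (subst expect_weighted_est)
       (auto intro!: determined_by_mult determined_by_prob determined_by_const
         simp: prob_blind_to_pending algebra_simps)
  also have "\<dots> \<le> 1"
    using s loss_range by (intro expect_prob_weighted_le_one) (auto intro: mult_le_one)
  finally show ?thesis .
qed

lemma sum_prob_ratio_le:
  assumes "1 \<le> s"
  shows "(\<Sum>b\<in>{1..K}. prob A (s + d s) b * (ell s b)\<^sup>2 / prob A s b) \<le> 2 * real K"
proof -
  have "prob A (s + d s) b * (ell s b)\<^sup>2 / prob A s b \<le> 2" if b: "b \<in> {1..K}" for b
  proof -
    have "prob A (s + d s) b * (ell s b)\<^sup>2 \<le> prob A (s + d s) b"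
      using loss_range[OF b, of s] kernel_nonneg by (simp add: mult_left_le power_le_one)
    also have "\<dots> \<le> 2 * prob A s b"
      using assms b delay_le[of s] by (intro prob_le_twice) auto
    finally show ?thesis using prob_pos[of s A b] assms by (simp add: divide_le_eq)
  qed
  then have "(\<Sum>b\<in>{1..K}. prob A (s + d s) b * (ell s b)\<^sup>2 / prob A s b) \<le> (\<Sum>b\<in>{1..K}. 2)"
    by (intro sum_mono) auto
  then show ?thesis by simp
qed

lemma expect_cross_est_self_le:
  assumes s: "s \<in> {1..T}"
  shows "expect T (cross_est s s) \<le> 2 * real K"
proof -
  have "expect T (cross_est s s) = expect T (\<lambda>A. \<Sum>x\<in>{1..K}. prob A s x * cross_est s s (A(s := x)))"
    unfolding cross_est_def using s
    by (intro expect_resample_round determined_by_sum determined_by_mult determined_by_prob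
        determined_by_est) auto
  also have "\<dots> = expect T (\<lambda>A. \<Sum>b\<in>{1..K}. prob A (s + d s) b * (ell s b)\<^sup>2 / prob A s b)"
  proof (rule expect_cong)
    fix A :: "nat \<Rightarrow> nat"
    have "(\<Sum>x\<in>{1..K}. prob A s x * cross_est s s (A(s := x)))
        = (\<Sum>b\<in>{1..K}. \<Sum>x\<in>{1..K}. prob A s x * (prob A (s + d s) b * (est (A(s := x)) s b)\<^sup>2))"
      unfolding cross_est_def prob_blind_to_pending[OF le_refl] sum_distrib_left
      by (subst sum.swap) (simp add: power2_eq_square algebra_simps)
    also have "\<dots> = (\<Sum>b\<in>{1..K}. prob A (s + d s) b * (ell s b)\<^sup>2 / prob A s b)"
      using s by (intro sum.cong refl resampled_est_second_moment) auto
    finally show "(\<Sum>x\<in>{1..K}. prob A s x * cross_est s s (A(s := x)))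
        = (\<Sum>b\<in>{1..K}. prob A (s + d s) b * (ell s b)\<^sup>2 / prob A s b)" .
  qed
  also have "\<dots> \<le> expect T (\<lambda>_. 2 * real K)"
    using s by (intro expect_mono sum_prob_ratio_le) auto
  finally show ?thesis by (simp add: expect_const)
qed

section \<open>The potential argument along a history\<close>

lemma normalizer_le_quadratic:
  assumes n: "0 < n"
  shows "normalizer A n - 1 \<le> - \<eta> * (\<Sum>b\<in>{1..K}. prob A n b * arrived_est A n b)
                              + \<eta>\<^sup>2 / 2 * (\<Sum>b\<in>{1..K}. prob A n b * (arrived_est A n b)\<^sup>2)"
proof -
  have "normalizer A n - 1 = (\<Sum>b\<in>{1..K}. prob A n b * (exp (- (\<eta> * arrived_est A n b)) - 1))"
    unfolding normalizer_def using prob_sum[OF n, of A] by (simp add: algebra_simps sum_subtractf)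
  also have "\<dots> \<le> (\<Sum>b\<in>{1..K}. prob A n b *
                    (- (\<eta> * arrived_est A n b) + (\<eta> * arrived_est A n b)\<^sup>2 / 2))"
  proof (intro sum_mono mult_left_mono kernel_nonneg)
    fix b assume "b \<in> {1..K}"
    then have "0 \<le> \<eta> * arrived_est A n b" using eta_pos arrived_est_nonneg by simp
    from exp_minus_le_quadratic[OF this]
    show "exp (- (\<eta> * arrived_est A n b)) - 1
        \<le> - (\<eta> * arrived_est A n b) + (\<eta> * arrived_est A n b)\<^sup>2 / 2" by simp
  qed
  also have "\<dots> = - \<eta> * (\<Sum>b\<in>{1..K}. prob A n b * arrived_est A n b)
                 + \<eta>\<^sup>2 / 2 * (\<Sum>b\<in>{1..K}. prob A n b * (arrived_est A n b)\<^sup>2)"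
    by (simp add: sum_distrib_left sum.distrib[symmetric] power2_eq_square algebra_simps)
  finally show ?thesis .
qed

lemma ln_potential_le:
  "ln (potential A N) - ln K \<le> (\<Sum>n\<in>{1..N}. - \<eta> * (\<Sum>b\<in>{1..K}. prob A n b * arrived_est A n b)
                              + \<eta>\<^sup>2 / 2 * (\<Sum>b\<in>{1..K}. prob A n b * (arrived_est A n b)\<^sup>2))"
proof (induction N)
  case 0
  have "potential A 0 = K" unfolding potential_def cum_est_def by simp
  then show ?case by simp
next
  case (Suc N)
  have "ln (potential A (Suc N)) = ln (potential A N) + ln (normalizer A (Suc N))"
    unfolding normalizer_eq_potential_ratio using potential_pos[of A N] potential_pos[of A "Suc N"]
    by (simp add: ln_div)
  moreover have "ln (normalizer A (Suc N)) \<le> normalizer A (Suc N) - 1"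
    using normalizer_pos by (intro ln_le_minus_one) simp
  ultimately show ?case
    using Suc.IH normalizer_le_quadratic[of "Suc N" A] by (simp add: sum.cl_ivl_Suc)
qed

lemma exp_weights_bound:
  assumes a: "a \<in> {1..K}"
  shows "(\<Sum>n\<in>{1..N}. \<Sum>b\<in>{1..K}. prob A n b * arrived_est A n b)
     \<le> cum_est A N a + ln K / \<eta>
       + \<eta> / 2 * (\<Sum>n\<in>{1..N}. \<Sum>b\<in>{1..K}. prob A n b * (arrived_est A n b)\<^sup>2)"
proof -
  define S1 where "S1 = (\<Sum>n\<in>{1..N}. \<Sum>b\<in>{1..K}. prob A n b * arrived_est A n b)"
  define S2 where "S2 = (\<Sum>n\<in>{1..N}. \<Sum>b\<in>{1..K}. prob A n b * (arrived_est A n b)\<^sup>2)"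
  have "exp (- \<eta> * cum_est A N a) \<le> potential A N"
    unfolding potential_def using a by (intro member_le_sum) auto
  then have "- \<eta> * cum_est A N a \<le> ln (potential A N)"
    using potential_pos[of A N] by (simp add: ln_ge_iff)
  moreover have "ln (potential A N) - ln K \<le> - \<eta> * S1 + \<eta>\<^sup>2 / 2 * S2"
    using ln_potential_le[of A N] unfolding S1_def S2_def by (simp add: sum.distrib sum_distrib_left)
  ultimately have "\<eta> * S1 \<le> \<eta> * (cum_est A N a + ln K / \<eta> + \<eta> / 2 * S2)"
    using eta_pos by (simp add: algebra_simps power2_eq_square)
  then show ?thesis unfolding S1_def[symmetric] S2_def[symmetric] using eta_pos by simp
qed

lemma prob_drift_le:
  assumes "1 \<le> t"
  shows "(\<Sum>b\<in>{1..K}. (prob A t b - prob A (t + m) b) * ell t b)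
         \<le> \<eta> * (\<Sum>k\<in>{t..<t + m}. \<Sum>b\<in>{1..K}. prob A k b * arrived_est A k b)"
proof (induction m)
  case (Suc m)
  have n: "0 < t + m" using assms by simp
  have "(prob A (t + m) b - prob A (Suc (t + m)) b) * ell t b
      \<le> \<eta> * (prob A (t + m) b * arrived_est A (t + m) b)" if b: "b \<in> {1..K}" for b
  proof -
    have "(prob A (t + m) b - prob A (Suc (t + m)) b) * ell t b
        \<le> \<eta> * (prob A (t + m) b * arrived_est A (t + m) b) * ell t b"
      using prob_Suc_drop_le[OF n b] loss_range[OF b] by (intro mult_right_mono) auto
    also have "\<dots> \<le> \<eta> * (prob A (t + m) b * arrived_est A (t + m) b)"
      using loss_range[OF b] eta_pos kernel_nonneg arrived_est_nonneg[OF b]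
      by (intro mult_left_le) auto
    finally show ?thesis .
  qed
  then have "(\<Sum>b\<in>{1..K}. (prob A (t + m) b - prob A (Suc (t + m)) b) * ell t b)
      \<le> \<eta> * (\<Sum>b\<in>{1..K}. prob A (t + m) b * arrived_est A (t + m) b)"
    unfolding sum_distrib_left by (intro sum_mono) auto
  moreover have "(\<Sum>b\<in>{1..K}. (prob A t b - prob A (t + Suc m) b) * ell t b)
      = (\<Sum>b\<in>{1..K}. (prob A t b - prob A (t + m) b) * ell t b)
        + (\<Sum>b\<in>{1..K}. (prob A (t + m) b - prob A (Suc (t + m)) b) * ell t b)"
    unfolding sum.distrib[symmetric] by (intro sum.cong refl) (simp add: algebra_simps)
  moreover have "{t..<t + Suc m} = insert (t + m) {t..<t + m}" by auto
  ultimately show ?case using Suc.IH by (simp add: distrib_left)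
qed simp

lemma sum_over_arrivals:
  "(\<Sum>n\<in>{1..T + dmax}. \<Sum>s\<in>{1..T}. if s + d s = n then g s else 0) = (\<Sum>s\<in>{1..T}. g s)"
proof -
  have "(\<Sum>n\<in>{1..T + dmax}. if s + d s = n then g s else 0) = g s" if "s \<in> {1..T}" for s
    using that delay_le[of s] by (simp add: sum.delta)
  then show ?thesis by (subst sum.swap) simp
qed

lemma sum_prob_arrived_est:
  "(\<Sum>n\<in>{1..T + dmax}. \<Sum>b\<in>{1..K}. prob A n b * arrived_est A n b)
   = (\<Sum>s\<in>{1..T}. \<Sum>b\<in>{1..K}. prob A (s + d s) b * est A s b)"
proof -
  have "(\<Sum>b\<in>{1..K}. prob A n b * arrived_est A n b)
      = (\<Sum>s\<in>{1..T}. if s + d s = n then \<Sum>b\<in>{1..K}. prob A (s + d s) b * est A s b else 0)" for n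
    unfolding arrived_est_def sum_distrib_left by (subst sum.swap) (auto intro!: sum.cong)
  then show ?thesis by (simp only: sum_over_arrivals)
qed

lemma sum_prob_arrived_est_squared:
  "(\<Sum>n\<in>{1..T + dmax}. \<Sum>b\<in>{1..K}. prob A n b * (arrived_est A n b)\<^sup>2)
   = (\<Sum>s\<in>{1..T}. \<Sum>s'\<in>{1..T}. if s + d s = s' + d s' then cross_est s s' A else 0)"
proof -
  have "(\<Sum>b\<in>{1..K}. prob A n b * (arrived_est A n b)\<^sup>2)
      = (\<Sum>s\<in>{1..T}. if s + d s = n
           then \<Sum>s'\<in>{1..T}. if s + d s = s' + d s' then cross_est s s' A else 0 else 0)" for n
  proof -
    let ?arr = "\<lambda>s b. if s + d s = n then est A s b else 0"
    have "(\<Sum>b\<in>{1..K}. prob A n b * (arrived_est A n b)\<^sup>2)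
        = (\<Sum>b\<in>{1..K}. \<Sum>s\<in>{1..T}. \<Sum>s'\<in>{1..T}. prob A n b * (?arr s b * ?arr s' b))"
    proof -
      have "(arrived_est A n b)\<^sup>2 = (\<Sum>s\<in>{1..T}. \<Sum>s'\<in>{1..T}. ?arr s b * ?arr s' b)" for b
        by (simp only: arrived_est_def power2_eq_square sum_product)
      then show ?thesis by (simp only: sum_distrib_left)
    qed
    also have "\<dots> = (\<Sum>s\<in>{1..T}. \<Sum>s'\<in>{1..T}. \<Sum>b\<in>{1..K}. prob A n b * (?arr s b * ?arr s' b))"
      by (subst sum.swap, rule sum.cong[OF refl], rule sum.swap)
    also have "\<dots> = (\<Sum>s\<in>{1..T}. \<Sum>s'\<in>{1..T}.
                        if s + d s = n \<and> s' + d s' = n then cross_est s s' A else 0)"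
      by (intro sum.cong refl) (auto simp: cross_est_def algebra_simps)
    also have "\<dots> = (\<Sum>s\<in>{1..T}. if s + d s = n
           then \<Sum>s'\<in>{1..T}. if s + d s = s' + d s' then cross_est s s' A else 0 else 0)"
      by (intro sum.cong refl) (auto intro!: sum.cong)
    finally show ?thesis .
  qed
  then show ?thesis by (simp only: sum_over_arrivals)
qed

lemma cum_est_final: "cum_est A (T + dmax) a = (\<Sum>s\<in>{1..T}. est A s a)"
  unfolding cum_est_def using delay_le by (intro sum.cong refl) (auto intro: add_mono)

lemma loss_eq_prob_est:
  assumes "A t \<in> {1..K}" and "1 \<le> t"
  shows "ell t (A t) = (\<Sum>b\<in>{1..K}. prob A t b * est A t b)"
proof -
  have "(\<Sum>b\<in>{1..K}. prob A t b * est A t b) = (\<Sum>b\<in>{1..K}. if b = A t then ell t b else 0)"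
  proof (rule sum.cong[OF refl])
    fix b
    have "prob A t b \<noteq> 0" using prob_pos[of t A b] assms(2) by simp
    then show "prob A t b * est A t b = (if b = A t then ell t b else 0)" by (simp add: est_def)
  qed
  then show ?thesis using assms(1) by simp
qed

lemma loss_le_per_history:
  assumes A: "A \<in> PiE {1..T} (\<lambda>_. {1..K})" and a: "a \<in> {1..K}"
  shows "(\<Sum>t\<in>{1..T}. ell t (A t))
      \<le> (\<Sum>s\<in>{1..T}. est A s a) + ln K / \<eta>
        + \<eta> / 2 * (\<Sum>s\<in>{1..T}. \<Sum>s'\<in>{1..T}. if s + d s = s' + d s' then cross_est s s' A else 0)
        + (\<Sum>t\<in>{1..T}. \<Sum>b\<in>{1..K}. (prob A t b - prob A (t + d t) b) * est A t b)"
proof -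
  have "(\<Sum>t\<in>{1..T}. ell t (A t)) = (\<Sum>t\<in>{1..T}. \<Sum>b\<in>{1..K}. prob A t b * est A t b)"
    using A by (intro sum.cong refl loss_eq_prob_est) auto
  also have "\<dots> = (\<Sum>n\<in>{1..T + dmax}. \<Sum>b\<in>{1..K}. prob A n b * arrived_est A n b)
      + (\<Sum>t\<in>{1..T}. \<Sum>b\<in>{1..K}. (prob A t b - prob A (t + d t) b) * est A t b)"
    unfolding sum_prob_arrived_est sum.distrib[symmetric]
    by (intro sum.cong refl) (simp add: algebra_simps)
  finally show ?thesis
    using exp_weights_bound[OF a, of A "T + dmax"]
    unfolding cum_est_final sum_prob_arrived_est_squared by linarith
qed

section \<open>Expected regret\<close>

lemma expect_prob_arrived_est_le:
  assumes "0 < k"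
  shows "expect T (\<lambda>A. \<Sum>b\<in>{1..K}. prob A k b * arrived_est A k b) \<le> arrivals k"
proof -
  have "expect T (\<lambda>A. \<Sum>b\<in>{1..K}. prob A k b * arrived_est A k b)
      = expect T (\<lambda>A. \<Sum>s\<in>{1..T}. if s + d s = k then \<Sum>b\<in>{1..K}. prob A k b * est A s b else 0)"
    unfolding arrived_est_def sum_distrib_left
    by (rule expect_cong, subst sum.swap) (auto intro!: sum.cong)
  also have "\<dots> = (\<Sum>s\<in>{1..T}.
      expect T (\<lambda>A. if s + d s = k then \<Sum>b\<in>{1..K}. prob A k b * est A s b else 0))"
    by (rule expect_sum) simp
  also have "\<dots> \<le> arrivals k"
    unfolding arrivals_def
    using expect_arrival_est_le_one by (intro sum_mono) (auto simp: expect_const)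
  finally show ?thesis .
qed

lemma sum_arrivals: "(\<Sum>k\<in>{s..<n}. arrivals k) = arrivals_between s n"
  unfolding arrivals_def arrivals_between_def by (subst sum.swap) (simp add: sum.delta)

lemma expect_drift_le:
  assumes t: "t \<in> {1..T}"
  shows "expect T (\<lambda>A. \<Sum>b\<in>{1..K}. (prob A t b - prob A (t + d t) b) * est A t b)
     \<le> \<eta> * arrivals_between t (t + d t)"
proof -
  have "expect T (\<lambda>A. \<Sum>b\<in>{1..K}. (prob A t b - prob A (t + d t) b) * est A t b)
      = expect T (\<lambda>A. \<Sum>b\<in>{1..K}. (prob A t b - prob A (t + d t) b) * ell t b)"
    using t by (intro expect_weighted_est determined_by_diff determined_by_prob)
      (auto simp: prob_blind_to_pending)
  also have "\<dots> \<le> expect T (\<lambda>A. \<eta> * (\<Sum>k\<in>{t..<t + d t}. \<Sum>b\<in>{1..K}. prob A k b * arrived_est A k b))"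
    using t by (intro expect_mono prob_drift_le) auto
  also have "\<dots> = \<eta> * (\<Sum>k\<in>{t..<t + d t}. expect T (\<lambda>A. \<Sum>b\<in>{1..K}. prob A k b * arrived_est A k b))"
    by (simp add: expect_cmult expect_sum)
  also have "\<dots> \<le> \<eta> * (\<Sum>k\<in>{t..<t + d t}. arrivals k)"
    using t eta_pos by (intro mult_left_mono sum_mono expect_prob_arrived_est_le) auto
  finally show ?thesis unfolding sum_arrivals .
qed

lemma expect_cross_est_sum_le:
  "expect T (\<lambda>A. \<Sum>s\<in>{1..T}. \<Sum>s'\<in>{1..T}. if s + d s = s' + d s' then cross_est s s' A else 0)
   \<le> 2 * real K * T + (\<Sum>s\<in>{1..T}. \<Sum>s'\<in>{1..T}. if s \<noteq> s' \<and> s + d s = s' + d s' then 1 else 0)"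
proof -
  have "expect T (\<lambda>A. if s + d s = s' + d s' then cross_est s s' A else 0)
      \<le> (if s = s' then 2 * real K else 0) + (if s \<noteq> s' \<and> s + d s = s' + d s' then 1 else 0)"
    if "s \<in> {1..T}" "s' \<in> {1..T}" for s s'
    using that expect_cross_est_self_le[of s] expect_cross_est_le_one[of s s']
    by (cases "s = s'") (auto simp: expect_const)
  then have "expect T (\<lambda>A. \<Sum>s\<in>{1..T}. \<Sum>s'\<in>{1..T}. if s + d s = s' + d s' then cross_est s s' A else 0)
      \<le> (\<Sum>s\<in>{1..T}. \<Sum>s'\<in>{1..T}. (if s = s' then 2 * real K else 0)
            + (if s \<noteq> s' \<and> s + d s = s' + d s' then 1 else 0))"
    unfolding expect_sum[OF finite_atLeastAtMost] by (intro sum_mono) auto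
  then show ?thesis by (simp add: sum.distrib mult_ac)
qed

theorem expected_loss_le:
  assumes a: "a \<in> {1..K}"
  shows "expect T (\<lambda>A. \<Sum>t\<in>{1..T}. ell t (A t))
     \<le> (\<Sum>t\<in>{1..T}. ell t a) + ln K / \<eta> + \<eta> * (K * T + (\<Sum>t\<in>{1..T}. real (d t)))"
proof -
  define V where "V A =
    (\<Sum>s\<in>{1..T}. \<Sum>s'\<in>{1..T}. if s + d s = s' + d s' then cross_est s s' A else 0)" for A
  define drift where "drift t A =
    (\<Sum>b\<in>{1..K}. (prob A t b - prob A (t + d t) b) * est A t b)" for t A
  define overlaps where "overlaps =
    (\<Sum>s\<in>{1..T}. \<Sum>s'\<in>{1..T}. if s \<noteq> s' \<and> s + d s = s' + d s' then 1 else 0::real)"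
  have "expect T (\<lambda>A. \<Sum>t\<in>{1..T}. ell t (A t))
      \<le> expect T (\<lambda>A. (\<Sum>s\<in>{1..T}. est A s a) + ln K / \<eta> + \<eta> / 2 * V A + (\<Sum>t\<in>{1..T}. drift t A))"
    unfolding V_def drift_def by (intro expect_mono loss_le_per_history a)
  also have "\<dots> = (\<Sum>s\<in>{1..T}. expect T (\<lambda>A. est A s a)) + ln K / \<eta> + \<eta> / 2 * expect T V
      + (\<Sum>t\<in>{1..T}. expect T (drift t))"
    by (simp only: expect_add expect_cmult expect_sum finite_atLeastAtMost expect_const)
  also have "(\<Sum>s\<in>{1..T}. expect T (\<lambda>A. est A s a)) = (\<Sum>s\<in>{1..T}. ell s a)"
    using a by (intro sum.cong refl expect_est) auto
  also have "expect T V \<le> 2 * real K * T + overlaps"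
    unfolding V_def overlaps_def by (rule expect_cross_est_sum_le)
  also have "(\<Sum>t\<in>{1..T}. expect T (drift t)) \<le> \<eta> * (\<Sum>t\<in>{1..T}. arrivals_between t (t + d t))"
    unfolding drift_def sum_distrib_left by (intro sum_mono expect_drift_le)
  also have "(\<Sum>t\<in>{1..T}. arrivals_between t (t + d t)) \<le> (\<Sum>t\<in>{1..T}. real (d t)) - overlaps / 2"
    using delay_overlap_count_le[of d T]
    unfolding arrivals_between_def overlaps_def by simp
  finally show ?thesis using eta_pos by (simp add: algebra_simps mult_left_mono)
qed

end

lemma dew_eta'_pos: "0 < \<eta> \<Longrightarrow> 0 < dew_eta' \<eta> dmax"
  unfolding dew_eta'_def by auto

lemma dew_eta'_le: "dew_eta' \<eta> dmax \<le> \<eta>"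
  unfolding dew_eta'_def by auto

lemma dew_eta'_delay_le: "4 * exp 1 * dew_eta' \<eta> dmax * dmax \<le> 1"
proof (cases "dmax = 0")
  case False
  then have "dew_eta' \<eta> dmax \<le> 1 / (4 * exp 1 * real dmax)" unfolding dew_eta'_def by simp
  then show ?thesis using False by (simp add: le_divide_eq algebra_simps)
qed simp

lemma div_dew_eta'_le: "L / dew_eta' \<eta> dmax \<le> max (L / \<eta>) (4 * exp 1 * real dmax * L)"
  unfolding dew_eta'_def min_def by (auto simp: mult.commute)

lemma dew_regret_le:
  assumes "1 \<le> K" and "0 < \<eta>"
    and loss: "\<forall>t. \<forall>a\<in>{1..K}. 0 \<le> ell t a \<and> ell t a \<le> 1"
    and delay: "\<forall>t. d t \<le> dmax"
  shows "dew_regret K T ell d \<eta> dmax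
    \<le> ln K / dew_eta' \<eta> dmax + dew_eta' \<eta> dmax * (K * T + (\<Sum>t=1..T. real (d t)))"
proof -
  define \<eta>' where "\<eta>' = dew_eta' \<eta> dmax"
  define ell' where "ell' t a = (if t \<le> T then ell t a else 0)" for t a
  interpret run: dew_run K T ell' d \<eta>' dmax
    unfolding \<eta>'_def
    by unfold_locales (use assms dew_eta'_pos dew_eta'_delay_le in \<open>auto simp: ell'_def\<close>)
  have prob_eq: "dew_p \<eta>' K ell d A t = run.prob A t" if "t \<le> T" for A t
    unfolding dew_p_def using dew_probs_cong_losses[of t ell ell'] that by (simp add: ell'_def)
  have expected_loss: "dew_expected_loss K T ell d \<eta> dmax = run.expect T (\<lambda>A. \<Sum>t=1..T. ell' t (A t))"
    unfolding dew_expected_loss_def run.expect_def run.hist_prob_def \<eta>'_def[symmetric]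
    by (intro sum.cong refl arg_cong2[where f = "(*)"] prod.cong) (auto simp: prob_eq ell'_def)
  have "(MIN a\<in>{1..K}. \<Sum>t=1..T. ell t a) \<in> (\<lambda>a. \<Sum>t=1..T. ell t a) ` {1..K}"
    using assms(1) by (intro Min_in) auto
  then obtain a where a: "a \<in> {1..K}"
    and a_min: "(MIN a\<in>{1..K}. \<Sum>t=1..T. ell t a) = (\<Sum>t=1..T. ell t a)" by auto
  have "(\<Sum>t=1..T. ell' t a) = (\<Sum>t=1..T. ell t a)" by (simp add: ell'_def)
  then show ?thesis
    using run.expected_loss_le[OF a]
    unfolding dew_regret_def expected_loss a_min \<eta>'_def by simp
qed

lemma balanced_rate:
  fixes L X \<eta> :: real
  assumes "0 < X" and "0 < \<eta>" and \<eta>: "\<eta> = sqrt (L / X)"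
  shows "L / \<eta> + \<eta> * X = 2 * sqrt (X * L)"
proof -
  have "0 < L / X" using assms(2) unfolding \<eta> by simp
  then have "\<eta>\<^sup>2 = L / X" unfolding \<eta> by simp
  then have L: "L = X * \<eta>\<^sup>2" using assms(1) by simp
  show ?thesis
    unfolding L using assms(1,2) by (simp add: real_sqrt_mult power2_eq_square)
qed

theorem theorem1:
  fixes K T dmax :: nat and ell :: "nat \<Rightarrow> nat \<Rightarrow> real" and d :: "nat \<Rightarrow> nat" and \<eta> :: real
  assumes "K \<ge> 2" and "T \<ge> 1"
    and "\<forall>t. \<forall>a\<in>{1..K}. 0 \<le> ell t a \<and> ell t a \<le> 1"
    and "\<forall>t. d t \<le> dmax"
    and "\<eta> > 0"
  shows "(dew_regret K T ell d \<eta> dmax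
           \<le> max (ln (real K) / \<eta>) (4 * exp 1 * real dmax * ln (real K))
             + \<eta> * (real K * real T * exp 1 / 2 + real (\<Sum>t=1..T. d t)))
         \<and> (\<eta> = sqrt (ln (real K) / (real K * real T * exp 1 / 2 + real (\<Sum>t=1..T. d t)))
         \<and> \<eta> * (4 * exp 1 * real dmax) \<le> 1 \<longrightarrow>
         dew_regret K T ell d \<eta> dmax
           \<le> 2 * sqrt ((real K * real T * exp 1 / 2 + real (\<Sum>t=1..T. d t)) * ln (real K)))"
proof -
  define X where "X = real K * real T * exp 1 / 2 + real (\<Sum>t=1..T. d t)"
  have X_pos: "0 < X" unfolding X_def using assms(1,2) by (intro add_pos_nonneg) (auto intro: sum_nonneg)
  have "real K * real T * 2 \<le> real K * real T * exp 1"
    using exp_ge_add_one_self[of 1] by (intro mult_left_mono) auto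
  then have "real K * real T + (\<Sum>t=1..T. real (d t)) \<le> X" unfolding X_def by simp
  moreover have "0 \<le> real K * real T + (\<Sum>t=1..T. real (d t))" by (simp add: sum_nonneg)
  ultimately have "dew_eta' \<eta> dmax * (K * T + (\<Sum>t=1..T. real (d t))) \<le> \<eta> * X"
    using dew_eta'_le assms(5) by (intro mult_mono) simp_all
  then have bound: "dew_regret K T ell d \<eta> dmax \<le> max (ln K / \<eta>) (4 * exp 1 * real dmax * ln K) + \<eta> * X"
    using dew_regret_le[of K \<eta> ell d dmax T] div_dew_eta'_le[of "ln K" \<eta> dmax] assms by simp
  moreover have "dew_regret K T ell d \<eta> dmax \<le> 2 * sqrt (X * ln K)"
    if tuned: "\<eta> = sqrt (ln K / X)" and small: "\<eta> * (4 * exp 1 * real dmax) \<le> 1"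
  proof -
    have "4 * exp 1 * real dmax * ln K \<le> ln K / \<eta>"
      using small assms(1,5) by (simp add: le_divide_eq mult_right_mono algebra_simps)
    then show ?thesis
      using bound balanced_rate[OF X_pos assms(5) tuned] by simp
  qed
  ultimately show ?thesis unfolding X_def by blast
qed

end
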